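(* Let $P \geq 3$ be an integer and $p = P!/2!$, and let $N$ be the number of positive integers $d$ such that $d(d+1)$ divides $P!$. Then for each such $d$ the three numbers $-p - 2p\left(d + \frac{1}{d}\right)$, $p + 2p\left(d + \frac{1}{d+1}\right)$, $p + 2p\left(\frac{1}{d} + \frac{d}{d+1}\right)$ are integers and $$\left\{-p - 2p\left(d + \frac{1}{d}\right)\right\}^3 + \left\{p + 2p\left(d + \frac{1}{d+1}\right)\right\}^3 + \left\{p + 2p\left(\frac{1}{d} + \frac{d}{d+1}\right)\right\}^3 = 3p^3 = 3\left(\frac{P!}{2!}\right)^3,$$ and the $N$ values of $d$ yield $N$ distinct sets of three cubes representing $3(P!/2!)^3$. Moreover, if $P \geq 5$, then $N \geq P$, so $3(P!/2!)^3$ is represented by at least $P$ distinct sets of three integer cubes. *)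

theory Defs
  imports Complex_Main
begin

end

theory Submission
  imports Defs
begin

text \<open>
  Clearing the denominators d and d + 1 turns the cube identity into a polynomial identity.
  The three numbers are integers because d and d + 1 both divide 2p = P!.
  Only the first cube is negative, and it determines d because d + 1/d is strictly
  increasing on the positive integers, so distinct d give distinct triples.
  All d < P belong to the set of admissible d. If P \<ge> 5 there is one more admissible
  d \<ge> P: d = 5 for P = 5, and otherwise d = k^2 - 1 with k = \<lfloor>P/2\<rfloor>, because
  2 (k^2 - 1) k^2 = (k - 1) k (k + 1) (2k) is a product of distinct factors of P!.
\<close>

lemma three_cubes_identity:
  fixes p d :: "'a::field"
  assumes "d \<noteq> 0" "d + 1 \<noteq> 0"
  shows "(- p - 2 * p * (d + 1 / d))^3 + (p + 2 * p * (d + 1 / (d + 1)))^3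
           + (p + 2 * p * (1 / d + d / (d + 1)))^3 = 3 * p^3"
proof -
  define e where "e = 1 / d"
  define f where "f = 1 / (d + 1)"
  have "d * e = 1" "(d + 1) * f = 1" "d / (d + 1) = d * f"
    using assms by (simp_all add: e_def f_def)
  then show ?thesis
    unfolding e_def[symmetric] f_def[symmetric] by algebra
qed

lemma three_cubes_Ints:
  fixes p d :: "'a::field"
  assumes "p \<in> \<int>" "d \<in> \<int>" "2 * p / d \<in> \<int>" "2 * p / (d + 1) \<in> \<int>"
  shows "- p - 2 * p * (d + 1 / d) \<in> \<int>"
    and "p + 2 * p * (d + 1 / (d + 1)) \<in> \<int>"
    and "p + 2 * p * (1 / d + d / (d + 1)) \<in> \<int>"
proof -
  have "- p - 2 * p * (d + 1 / d) = - p - 2 * p * d - 2 * p / d"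
    and "p + 2 * p * (d + 1 / (d + 1)) = p + 2 * p * d + 2 * p / (d + 1)"
    and "p + 2 * p * (1 / d + d / (d + 1)) = p + 2 * p / d + d * (2 * p / (d + 1))"
    by (simp_all add: algebra_simps)
  with assms show "- p - 2 * p * (d + 1 / d) \<in> \<int>"
    and "p + 2 * p * (d + 1 / (d + 1)) \<in> \<int>"
    and "p + 2 * p * (1 / d + d / (d + 1)) \<in> \<int>"
    by (metis Ints_diff Ints_add Ints_mult Ints_minus Ints_numeral)+
qed

lemma strict_mono_on_plus_inverse_of_nat:
  "strict_mono_on {0<..} (\<lambda>d::nat. of_nat d + 1 / of_nat d :: 'a::linordered_field)"
proof (rule strict_mono_onI)
  fix a b :: nat
  assume "a \<in> {0<..}" "a < b"
  then have "1 / (of_nat a :: 'a) \<le> 1" "0 < 1 / (of_nat b :: 'a)"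
    by simp_all
  moreover have "of_nat a + 1 \<le> (of_nat b :: 'a)"
    using \<open>a < b\<close> by (metis Suc_leI of_nat_Suc of_nat_le_iff add.commute)
  ultimately show "of_nat a + 1 / of_nat a < (of_nat b + 1 / of_nat b :: 'a)"
    by linarith
qed

lemma cube_triples_eq_imp_negative_eq:
  fixes a b c a' b' c' :: "'a::linordered_idom"
  assumes eq: "{a^3, b^3, c^3} = {a'^3, b'^3, c'^3}"
    and "a < 0" "a' < 0" "0 \<le> b'" "0 \<le> c'"
  shows "a = a'"
proof -
  have "a^3 < 0" "0 \<le> b'^3" "0 \<le> c'^3"
    using assms by (simp_all add: odd_power_less_zero[of a 1, simplified])
  then have "a^3 \<notin> {b'^3, c'^3}"
    using leD by fastforce
  moreover have "a^3 \<in> {a'^3, b'^3, c'^3}"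
    using eq by blast
  ultimately have "a^3 = a'^3"
    by blast
  then have "(- a)^3 = (- a')^3"
    by simp
  then show "a = a'"
    using assms power_eq_imp_eq_base[of "- a" 3 "- a'"] by simp
qed

lemma inj_on_three_cube_triples:
  fixes p :: "'a::linordered_field"
  assumes "0 < p"
  shows "inj_on (\<lambda>d::nat. {(- p - 2 * p * (of_nat d + 1 / of_nat d))^3,
                            (p + 2 * p * (of_nat d + 1 / (of_nat d + 1)))^3,
                            (p + 2 * p * (1 / of_nat d + of_nat d / (of_nat d + 1)))^3}) {0<..}"
proof (rule inj_onI)
  fix d1 d2 :: nat
  assume d1: "d1 \<in> {0<..}" and d2: "d2 \<in> {0<..}"
    and eq: "{(- p - 2 * p * (of_nat d1 + 1 / of_nat d1))^3,
              (p + 2 * p * (of_nat d1 + 1 / (of_nat d1 + 1)))^3,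
              (p + 2 * p * (1 / of_nat d1 + of_nat d1 / (of_nat d1 + 1)))^3} =
             {(- p - 2 * p * (of_nat d2 + 1 / of_nat d2))^3,
              (p + 2 * p * (of_nat d2 + 1 / (of_nat d2 + 1)))^3,
              (p + 2 * p * (1 / of_nat d2 + of_nat d2 / (of_nat d2 + 1)))^3}"
  have neg: "- p - 2 * p * (of_nat d + 1 / of_nat d) < 0" for d :: nat
  proof -
    have "0 \<le> 2 * p * (of_nat d + 1 / of_nat d)"
      using assms by simp
    with assms show ?thesis
      by linarith
  qed
  have nonneg: "0 \<le> p + 2 * p * (of_nat d + 1 / (of_nat d + 1))"
    "0 \<le> p + 2 * p * (1 / of_nat d + of_nat d / (of_nat d + 1))" for d :: nat
    using assms by simp_all
  from cube_triples_eq_imp_negative_eq[OF eq neg neg nonneg]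
  have "of_nat d1 + 1 / of_nat d1 = (of_nat d2 + 1 / of_nat d2 :: 'a)"
    using assms by simp
  from strict_mono_on_imp_inj_on[OF strict_mono_on_plus_inverse_of_nat] this d1 d2
  show "d1 = d2"
    by (rule inj_onD)
qed

lemma prod_dvd_fact:
  "A \<subseteq> {1..n} \<Longrightarrow> \<Prod>A dvd (fact n :: nat)"
  unfolding fact_prod by (simp add: prod_dvd_prod_subset)

lemma consecutive_mult_dvd_fact:
  assumes "0 < d" "d + 1 \<le> n"
  shows "d * (d + 1) dvd (fact n :: nat)"
  using prod_dvd_fact[of "{d, d + 1}" n] assms by simp

lemma square_pred_mult_square_dvd_fact:
  assumes "2 \<le> k" "2 * k \<le> n"
  shows "(k^2 - 1) * k^2 dvd (fact n :: nat)"
proof -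
  have distinct: "k - 1 \<notin> {k, k + 1, 2 * k}" "k \<notin> {k + 1, 2 * k}" "k + 1 \<noteq> 2 * k"
    using assms by auto
  have "\<Prod>{k - 1, k, k + 1, 2 * k} dvd fact n"
    using assms by (intro prod_dvd_fact) auto
  also have "\<Prod>{k - 1, k, k + 1, 2 * k} = ((k^2 - 1) * k^2) * 2"
  proof -
    obtain m where "k = Suc m"
      using assms by (cases k) auto
    with distinct show ?thesis
      by (simp add: algebra_simps power2_eq_square)
  qed
  finally show ?thesis
    using dvd_mult_left by blast
qed

lemma exists_large_consecutive_mult_dvd_fact:
  assumes "5 \<le> n"
  obtains d :: nat where "n \<le> d" "d * (d + 1) dvd fact n"
proof (cases "n = 5")
  case True
  have "(5::nat) * (5 + 1) dvd fact 5"
    by (simp add: fact_numeral)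
  with True that show ?thesis
    by blast
next
  case False
  define k where "k = n div 2"
  have k: "3 \<le> k" "2 * k \<le> n" "n \<le> 2 * k + 1"
    using assms False by (auto simp: k_def)
  then have "3 * k \<le> k^2"
    by (simp add: power2_eq_square)
  with k have "n \<le> k^2 - 1" "k^2 - 1 + 1 = k^2"
    by linarith+
  moreover have "(k^2 - 1) * k^2 dvd fact n"
    using k by (intro square_pred_mult_square_dvd_fact) simp_all
  ultimately show ?thesis
    using that[of "k^2 - 1"] by simp
qed

lemma finite_consecutive_mult_dvd:
  assumes "m \<noteq> 0"
  shows "finite {d::nat. 0 < d \<and> d * (d + 1) dvd m}"
proof (rule finite_subset[of _ "{..m}"])
  show "{d::nat. 0 < d \<and> d * (d + 1) dvd m} \<subseteq> {..m}"
  proof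
    fix d
    assume "d \<in> {d. 0 < d \<and> d * (d + 1) dvd m}"
    then have "d dvd m"
      using dvd_mult_left by blast
    with assms show "d \<in> {..m}"
      by (simp add: dvd_imp_le)
  qed
qed simp

lemma card_consecutive_mult_dvd_fact_ge:
  assumes "5 \<le> n"
  shows "n \<le> card {d::nat. 0 < d \<and> d * (d + 1) dvd fact n}"
proof -
  obtain e where "n \<le> e" "e * (e + 1) dvd fact n"
    using exists_large_consecutive_mult_dvd_fact assms by blast
  then have "insert e {1..<n} \<subseteq> {d. 0 < d \<and> d * (d + 1) dvd fact n}"
    using consecutive_mult_dvd_fact[of _ n] assms by auto
  from card_mono[OF finite_consecutive_mult_dvd[OF fact_nonzero] this]
  show ?thesis
    using \<open>n \<le> e\<close> assms by simp
qed

theorem lemma3p4: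
  fixes P :: nat
  assumes "P \<ge> 3"
  defines "p \<equiv> (fact P :: rat) / fact 2"
  defines "D \<equiv> {d::nat. d > 0 \<and> d * (d + 1) dvd fact P}"
  defines "x \<equiv> \<lambda>d::nat. - p - 2 * p * (of_nat d + 1 / of_nat d)"
  defines "y \<equiv> \<lambda>d::nat. p + 2 * p * (of_nat d + 1 / (of_nat d + 1))"
  defines "z \<equiv> \<lambda>d::nat. p + 2 * p * (1 / of_nat d + of_nat d / (of_nat d + 1))"
  shows "(\<forall>d\<in>D. x d \<in> \<int> \<and> y d \<in> \<int> \<and> z d \<in> \<int> \<and>
            (x d)^3 + (y d)^3 + (z d)^3 = 3 * p^3)
         \<and> finite D
         \<and> inj_on (\<lambda>d. {(x d)^3, (y d)^3, (z d)^3}) D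
         \<and> (P \<ge> 5 \<longrightarrow> card D \<ge> P)"
proof -
  have two_p: "2 * p = of_nat (fact P)" and "0 < p"
    by (simp_all add: p_def)
  have Ints_div: "2 * p / of_nat m \<in> \<int>" if "m dvd fact P" for m
    using that two_p by (metis of_nat_of_nat_div Ints_of_nat)
  have "p \<in> \<int>"
    using Ints_div[of 2] assms(1) by (simp add: dvd_fact)
  have "x d \<in> \<int> \<and> y d \<in> \<int> \<and> z d \<in> \<int> \<and> (x d)^3 + (y d)^3 + (z d)^3 = 3 * p^3"
    if "d \<in> D" for d
  proof -
    have "0 < d" "d dvd fact P" "d + 1 dvd fact P"
      using that dvd_mult_left dvd_mult_right unfolding D_def by blast+
    then have "2 * p / of_nat d \<in> \<int>" "2 * p / (of_nat d + 1) \<in> \<int>"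
      using Ints_div[of d] Ints_div[of "d + 1", unfolded of_nat_add of_nat_1] by blast+
    with \<open>0 < d\<close> show ?thesis
      using three_cubes_Ints[OF \<open>p \<in> \<int>\<close> Ints_of_nat] three_cubes_identity[of "of_nat d" p]
      by (simp add: x_def y_def z_def add_eq_0_iff2)
  qed
  moreover have "finite D"
    unfolding D_def by (rule finite_consecutive_mult_dvd) simp
  moreover have "inj_on (\<lambda>d. {(x d)^3, (y d)^3, (z d)^3}) D"
    using inj_on_three_cube_triples[OF \<open>0 < p\<close>] unfolding x_def y_def z_def
    by (rule inj_on_subset) (auto simp: D_def)
  moreover have "P \<ge> 5 \<longrightarrow> card D \<ge> P"
    unfolding D_def using card_consecutive_mult_dvd_fact_ge by blast
  ultimately show ?thesis
    by blast
qed

end
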